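(* Let $(S,d)$ be a metric space and $\bullet\in\{\mathrm{FM},\mathrm{BL}\}$. For every molecular measure $\mu=\sum_{j=1}^n a_j\delta_{s_j}$ ($n\in\mathbb{N}$, $a_j\in\mathbb{R}$, $s_j\in S$) there exists $f^\mu_\bullet\in E^S_\bullet$ such that $\|\mu\|^*_\bullet=\int_S f^\mu_\bullet\,d\mu$.
   Context: $\mathrm{BL}(S)$ is the space of bounded real-valued Lipschitz functions on $S$, $|f|_L=\sup_{x\neq y}|f(x)-f(y)|/d(x,y)$ (with $|f|_L=0$ on a singleton), $\|f\|_{\mathrm{BL}}=\|f\|_\infty+|f|_L$, $\|f\|_{\mathrm{FM}}=\max(\|f\|_\infty,|f|_L)$, $B^S_\bullet=\{f\in\mathrm{BL}(S):\|f\|_\bullet\le1\}$, and for a finite signed measure $\mu$, $\|\mu\|^*_\bullet=\sup_{f\in B^S_\bullet}\int_S f\,d\mu$. Subsets $P\subset S$ carry the restricted metric; $\operatorname{ext}$ denotes extreme points and $\operatorname{ext}_*(B^P_\bullet)=\operatorname{ext}(B^P_\bullet)\setminus\{f:|f|=\mathbf{1}\}$. For non-empty $P\subset S$, $f\in\mathrm{BL}(P)$: $\mathcal{E}^{S,0}_P f(x)=\sup_{p\in P}[f(p)-|f|_L d(p,x)]$, $\mathcal{E}^S_P f=\max(\mathcal{E}^{S,0}_P f,-\|f\|_\infty)$. $E^S_{\mathrm{BL}}=\bigcup_{P\subset S\text{ finite}}\mathcal{E}^S_P(\operatorname{ext}_*(B^P_{\mathrm{BL}}))\cup\{\mathbf{1},-\mathbf{1}\}$;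 $E^S_{\mathrm{FM}}=\bigcup_{P\subset S\text{ finite}}\mathcal{E}^S_P(\operatorname{ext}_*(B^P_{\mathrm{FM}}))\cup\{f\in B^S_{\mathrm{FM}}:|f|=\mathbf{1}\}\cup\{h_P:P\subset S\text{ finite, non-empty}\}$, with $h_P(x)=\max\big(-1,\sup_{p\in P}[1-d(x,p)]\big)$. *)

theory Defs
  imports Complex_Main
begin

text \<open>The metric space (S,d) is the type 'a with its metric dist; S = UNIV.
  A real-valued function on a subset P is represented by a function 'a \<Rightarrow> real
  that vanishes outside P (extensional representation).\<close>

datatype normkind = FM | BL

definition sup_norm :: "'a set \<Rightarrow> ('a \<Rightarrow> real) \<Rightarrow> real" where
  "sup_norm P f = (if P = {} then 0 else Sup ((\<lambda>x. \<bar>f x\<bar>) ` P))"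

definition lip_const :: "'a::metric_space set \<Rightarrow> ('a \<Rightarrow> real) \<Rightarrow> real" where
  "lip_const P f = (if \<exists>x\<in>P. \<exists>y\<in>P. x \<noteq> y
     then Sup {\<bar>f x - f y\<bar> / dist x y | x y. x \<in> P \<and> y \<in> P \<and> x \<noteq> y} else 0)"

definition is_BL :: "'a::metric_space set \<Rightarrow> ('a \<Rightarrow> real) \<Rightarrow> bool" where
  "is_BL P f \<longleftrightarrow> (\<forall>x. x \<notin> P \<longrightarrow> f x = 0) \<and> (\<exists>B. \<forall>x\<in>P. \<bar>f x\<bar> \<le> B) \<and>
     (\<exists>L. \<forall>x\<in>P. \<forall>y\<in>P. \<bar>f x - f y\<bar> \<le> L * dist x y)"

definition nrm :: "normkind \<Rightarrow> 'a::metric_space set \<Rightarrow> ('a \<Rightarrow> real) \<Rightarrow> real" where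
  "nrm k P f = (case k of
      BL \<Rightarrow> sup_norm P f + lip_const P f
    | FM \<Rightarrow> max (sup_norm P f) (lip_const P f))"

definition unit_ball :: "normkind \<Rightarrow> 'a::metric_space set \<Rightarrow> ('a \<Rightarrow> real) set" where
  "unit_ball k P = {f. is_BL P f \<and> nrm k P f \<le> 1}"

definition extreme_points :: "('a \<Rightarrow> real) set \<Rightarrow> ('a \<Rightarrow> real) set" where
  "extreme_points K = {f \<in> K. \<forall>g\<in>K. \<forall>h\<in>K. \<forall>t::real. 0 < t \<and> t < 1 \<and>
       f = (\<lambda>x. t * g x + (1 - t) * h x) \<longrightarrow> g = h}"

definition ext_star :: "normkind \<Rightarrow> 'a::metric_space set \<Rightarrow> ('a \<Rightarrow> real) set" where
  "ext_star k P = {f \<in> extreme_points (unit_ball k P). \<not> (\<forall>x\<in>P. \<bar>f x\<bar> = 1)}"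

definition ext_op :: "'a::metric_space set \<Rightarrow> ('a \<Rightarrow> real) \<Rightarrow> ('a \<Rightarrow> real)" where
  "ext_op P f = (\<lambda>x. max (Max ((\<lambda>p. f p - lip_const P f * dist p x) ` P)) (- sup_norm P f))"

definition hP :: "'a::metric_space set \<Rightarrow> ('a \<Rightarrow> real)" where
  "hP P = (\<lambda>x. max (-1) (Max ((\<lambda>p. 1 - dist x p) ` P)))"

definition E_set :: "normkind \<Rightarrow> ('a::metric_space \<Rightarrow> real) set" where
  "E_set k = (case k of
      BL \<Rightarrow> (\<Union>P\<in>{P. finite P \<and> P \<noteq> {}}. ext_op P ` ext_star BL P)
              \<union> {(\<lambda>_. 1), (\<lambda>_. -1)}
    | FM \<Rightarrow> (\<Union>P\<in>{P. finite P \<and> P \<noteq> {}}. ext_op P ` ext_star FM P)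
              \<union> {f \<in> unit_ball FM UNIV. \<forall>x. \<bar>f x\<bar> = 1}
              \<union> {hP P | P. finite P \<and> P \<noteq> {}})"

text \<open>Molecular measure \<Sum>_j a_j \<delta>_{s_j} given as the list of pairs (a_j, s_j).\<close>
definition mol_integral :: "('a \<Rightarrow> real) \<Rightarrow> (real \<times> 'a) list \<Rightarrow> real" where
  "mol_integral f mu = (\<Sum>(a, s)\<leftarrow>mu. a * f s)"

definition dual_norm :: "normkind \<Rightarrow> (real \<times> 'a::metric_space) list \<Rightarrow> real" where
  "dual_norm k mu = Sup {mol_integral f mu | f. f \<in> unit_ball k UNIV}"

end

theory Submission
  imports Defs "HOL-Analysis.Analysis"
begin

text \<open>Let \<open>P\<close> be a finite set containing the atoms of \<open>\<mu>\<close>. The unit ball over \<open>P\<close> is compact in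
  \<open>\<real>\<^sup>P\<close> and \<open>f \<mapsto> \<integral> f d\<mu>\<close> is linear, so the maximum over it is attained, and among the maximisers one
  maximising the strictly convex \<open>\<Sum>\<^sub>p f(p)\<^sup>2\<close> is an extreme point. McShane extension preserves
  the sup norm and the Lipschitz constant, and restriction to \<open>P\<close> does not increase them, so this
  maximum is the dual norm. An extreme point \<open>g\<close> not of modulus one on \<open>P\<close> is represented in \<open>E\<close>
  by its McShane extension. If \<open>\<bar>g\<bar> = 1\<close> on \<open>P\<close>, then for BL the constraint
  \<open>\<parallel>g\<parallel>\<^sub>\<infinity> + \<bar>g\<bar>\<^sub>L \<le> 1\<close> forces \<open>g\<close> to be constant, while for FM \<open>g\<close> agrees on \<open>P\<close> with \<open>h\<^sub>Q\<close>
  for \<open>Q = {g = 1}\<close>, or with \<open>-1\<close> if \<open>Q\<close> is empty.\<close>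

lemma abs_le_sup_norm:
  assumes "is_BL P f" "x \<in> P"
  shows "\<bar>f x\<bar> \<le> sup_norm P f"
proof -
  obtain B where "\<forall>x\<in>P. \<bar>f x\<bar> \<le> B"
    using assms(1) unfolding is_BL_def by blast
  then have "bdd_above ((\<lambda>x. \<bar>f x\<bar>) ` P)"
    by (auto intro: bdd_aboveI)
  then show ?thesis
    using assms(2) unfolding sup_norm_def by (auto intro: cSup_upper)
qed

lemma sup_norm_le:
  assumes "\<forall>x\<in>P. \<bar>f x\<bar> \<le> c" "0 \<le> c"
  shows "sup_norm P f \<le> c"
  using assms unfolding sup_norm_def by (auto intro!: cSup_least)

lemma sup_norm_nonneg:
  assumes "is_BL P f"
  shows "0 \<le> sup_norm P f"
proof (cases "P = {}")
  case False
  then obtain x where "x \<in> P" by blast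
  with abs_le_sup_norm[OF assms] show ?thesis by force
qed (simp add: sup_norm_def)

lemma ratio_le_lip_const:
  assumes "is_BL P f" "y \<in> P" "z \<in> P" "y \<noteq> z"
  shows "\<bar>f y - f z\<bar> / dist y z \<le> lip_const P f"
proof -
  obtain L where L: "\<forall>x\<in>P. \<forall>y\<in>P. \<bar>f x - f y\<bar> \<le> L * dist x y"
    using assms(1) unfolding is_BL_def by blast
  have "bdd_above {\<bar>f x - f y\<bar> / dist x y | x y. x \<in> P \<and> y \<in> P \<and> x \<noteq> y}"
    using L by (intro bdd_aboveI[where M = L]) (auto simp: divide_le_eq)
  then show ?thesis
    using assms unfolding lip_const_def by (auto intro!: cSup_upper)
qed

lemma lip_const_le:
  assumes "\<forall>y\<in>P. \<forall>z\<in>P. y \<noteq> z \<longrightarrow> \<bar>f y - f z\<bar> / dist y z \<le> c" "0 \<le> c"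
  shows "lip_const P f \<le> c"
  using assms unfolding lip_const_def by (auto intro!: cSup_least)

lemma lip_const_nonneg:
  assumes "is_BL P f"
  shows "0 \<le> lip_const P f"
proof (cases "\<exists>y\<in>P. \<exists>z\<in>P. y \<noteq> z")
  case True
  then obtain y z where "y \<in> P" "z \<in> P" "y \<noteq> z" by blast
  then show ?thesis
    using ratio_le_lip_const[OF assms] by (meson divide_nonneg_nonneg abs_ge_zero zero_le_dist order_trans)
qed (simp add: lip_const_def)

lemma abs_diff_le_lip_const:
  assumes "is_BL P f" "y \<in> P" "z \<in> P"
  shows "\<bar>f y - f z\<bar> \<le> lip_const P f * dist y z"
  using ratio_le_lip_const[OF assms] lip_const_nonneg[OF assms(1)]
  by (cases "y = z") (auto simp: divide_le_eq)

text \<open>The norm bound defining the unit ball is equivalent to the pointwise inequalities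
  \<open>sup_weight k * \<bar>f x\<bar> + \<bar>f y - f z\<bar> / dist y z \<le> 1\<close> and \<open>\<bar>f x\<bar> \<le> 1\<close>: for BL the sup and Lipschitz parts
  add up, for FM they are bounded separately. These conditions are closed and are easy to check
  for restrictions and extensions.\<close>

definition sup_weight :: "normkind \<Rightarrow> real" where
  "sup_weight k = (case k of BL \<Rightarrow> 1 | FM \<Rightarrow> 0)"

lemma sup_weight_nonneg: "0 \<le> sup_weight k"
  by (cases k) (simp_all add: sup_weight_def)

lemma unit_ball_imp_pointwise:
  assumes "f \<in> unit_ball k P" "x \<in> P" "y \<in> P" "z \<in> P" "y \<noteq> z"
  shows "sup_weight k * \<bar>f x\<bar> + \<bar>f y - f z\<bar> / dist y z \<le> 1"
proof -
  have bl: "is_BL P f" and n: "nrm k P f \<le> 1"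
    using assms(1) unfolding unit_ball_def by auto
  have "\<bar>f x\<bar> \<le> sup_norm P f" "\<bar>f y - f z\<bar> / dist y z \<le> lip_const P f"
    using abs_le_sup_norm ratio_le_lip_const bl assms by blast+
  then show ?thesis
    using n sup_norm_nonneg[OF bl] lip_const_nonneg[OF bl]
    by (cases k) (auto simp: nrm_def sup_weight_def)
qed

lemma unit_ball_abs_le_1:
  assumes "f \<in> unit_ball k P" "x \<in> P"
  shows "\<bar>f x\<bar> \<le> 1"
proof -
  have bl: "is_BL P f" and n: "nrm k P f \<le> 1"
    using assms(1) unfolding unit_ball_def by auto
  then show ?thesis
    using abs_le_sup_norm[OF bl assms(2)] sup_norm_nonneg[OF bl] lip_const_nonneg[OF bl]
    by (cases k) (auto simp: nrm_def)
qed

lemma unit_ball_vanishes: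
  "f \<in> unit_ball k P \<Longrightarrow> x \<notin> P \<Longrightarrow> f x = 0"
  by (simp add: unit_ball_def is_BL_def)

lemma pointwise_imp_unit_ball:
  assumes out: "\<forall>x. x \<notin> P \<longrightarrow> f x = 0"
    and bnd: "\<forall>x\<in>P. \<bar>f x\<bar> \<le> 1"
    and pw: "\<forall>x\<in>P. \<forall>y\<in>P. \<forall>z\<in>P. y \<noteq> z \<longrightarrow> sup_weight k * \<bar>f x\<bar> + \<bar>f y - f z\<bar> / dist y z \<le> 1"
  shows "f \<in> unit_ball k P"
proof -
  have ratio: "\<bar>f y - f z\<bar> / dist y z \<le> 1 - sup_weight k * \<bar>f x\<bar>"
    if "x \<in> P" "y \<in> P" "z \<in> P" "y \<noteq> z" for x y z
    using pw that by force
  have "\<bar>f y - f z\<bar> \<le> 1 * dist y z" if "y \<in> P" "z \<in> P" for y z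
    using ratio[of y y z] sup_weight_nonneg[of k] abs_ge_zero[of "f y"] that
    by (cases "y = z") (auto simp: divide_le_eq mult_nonneg_nonneg intro: order_trans)
  then have bl: "is_BL P f"
    using out bnd unfolding is_BL_def by blast
  have "nrm k P f \<le> 1"
  proof (cases k)
    case FM
    have "lip_const P f \<le> 1"
      using ratio by (intro lip_const_le) (auto simp: FM sup_weight_def)
    then show ?thesis
      using sup_norm_le[OF bnd] FM by (simp add: nrm_def)
  next
    case BL
    have "\<bar>f y - f z\<bar> / dist y z \<le> 1 - sup_norm P f"
      if "y \<in> P" "z \<in> P" "y \<noteq> z" for y z
    proof -
      have "\<forall>x\<in>P. \<bar>f x\<bar> \<le> 1 - \<bar>f y - f z\<bar> / dist y z"
        using ratio[OF _ that] BL by (force simp: sup_weight_def)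
      moreover have "0 \<le> 1 - \<bar>f y - f z\<bar> / dist y z"
        using ratio[OF that(1) that] BL by (simp add: sup_weight_def)
      ultimately have "sup_norm P f \<le> 1 - \<bar>f y - f z\<bar> / dist y z"
        by (rule sup_norm_le)
      then show ?thesis by simp
    qed
    then have "lip_const P f \<le> 1 - sup_norm P f"
      using sup_norm_le[OF bnd] by (intro lip_const_le) auto
    then show ?thesis
      using BL by (simp add: nrm_def)
  qed
  then show ?thesis
    using bl unfolding unit_ball_def by blast
qed

lemma unit_ball_restrict:
  assumes "f \<in> unit_ball k S" "P \<subseteq> S"
  shows "(\<lambda>x. if x \<in> P then f x else 0) \<in> unit_ball k P"
proof (intro pointwise_imp_unit_ball ballI allI impI)
  fix x y z assume "x \<in> P" "y \<in> P" "z \<in> P" "y \<noteq> z"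
  then show "sup_weight k * \<bar>if x \<in> P then f x else 0\<bar>
      + \<bar>(if y \<in> P then f y else 0) - (if z \<in> P then f z else 0)\<bar> / dist y z \<le> 1"
    using unit_ball_imp_pointwise[OF assms(1)] assms(2) by auto
qed (use unit_ball_abs_le_1[OF assms(1)] assms(2) in auto)

section \<open>McShane extension\<close>

context
  fixes P :: "'a::metric_space set" and g :: "'a \<Rightarrow> real"
  assumes fin: "finite P" and ne: "P \<noteq> {}" and bl: "is_BL P g"
begin

lemma ext_op_lipschitz: "\<bar>ext_op P g x - ext_op P g y\<bar> \<le> lip_const P g * dist x y"
proof -
  let ?L = "lip_const P g"
  let ?M = "\<lambda>x. Max ((\<lambda>p. g p - ?L * dist p x) ` P)"
  have shift: "?M x \<le> ?M y + ?L * dist x y" for x y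
  proof -
    have "g p - ?L * dist p x \<le> ?M y + ?L * dist x y" if p: "p \<in> P" for p
    proof -
      have "g p - ?L * dist p y \<le> ?M y"
        using fin p by (intro Max_ge) auto
      moreover have "?L * dist p y \<le> ?L * dist p x + ?L * dist x y"
        using lip_const_nonneg[OF bl] dist_triangle[of p y x]
        by (metis distrib_left mult_left_mono)
      ultimately show ?thesis by linarith
    qed
    then show ?thesis
      using fin ne by (subst Max_le_iff) auto
  qed
  have "0 \<le> ?L * dist x y"
    using lip_const_nonneg[OF bl] by simp
  then show ?thesis
    using shift[of x y] shift[of y x] unfolding ext_op_def
    by (simp add: dist_commute abs_le_iff max_def)
qed

lemma ext_op_abs_le_sup_norm: "\<bar>ext_op P g x\<bar> \<le> sup_norm P g"
proof -
  have "g p - lip_const P g * dist p x \<le> sup_norm P g" if "p \<in> P" for p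
    using abs_le_sup_norm[OF bl that] mult_nonneg_nonneg[OF lip_const_nonneg[OF bl] zero_le_dist, of p x]
    by linarith
  then have "Max ((\<lambda>p. g p - lip_const P g * dist p x) ` P) \<le> sup_norm P g"
    using fin ne by (subst Max_le_iff) auto
  then show ?thesis
    using sup_norm_nonneg[OF bl] unfolding ext_op_def by (simp add: abs_le_iff max_def)
qed

lemma ext_op_agrees: "x \<in> P \<Longrightarrow> ext_op P g x = g x"
proof -
  assume x: "x \<in> P"
  have "g p - lip_const P g * dist p x \<le> g x" if "p \<in> P" for p
    using abs_diff_le_lip_const[OF bl that x] by linarith
  then have "Max ((\<lambda>p. g p - lip_const P g * dist p x) ` P) = g x"
    using fin x by (intro Max_eqI) (auto intro: rev_image_eqI[of x])
  then show ?thesis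
    using abs_le_sup_norm[OF bl x] unfolding ext_op_def by (simp add: max_def abs_le_iff)
qed

lemma ext_op_in_unit_ball:
  assumes "g \<in> unit_ball k P"
  shows "ext_op P g \<in> unit_ball k UNIV"
proof (intro pointwise_imp_unit_ball ballI allI impI)
  have n: "nrm k P g \<le> 1"
    using assms unfolding unit_ball_def by blast
  note nonneg = sup_norm_nonneg[OF bl] lip_const_nonneg[OF bl]
  fix x show "\<bar>ext_op P g x\<bar> \<le> 1"
    using ext_op_abs_le_sup_norm[of x] n nonneg by (cases k) (auto simp: nrm_def)
  fix y z :: 'a assume "y \<noteq> z"
  then have "\<bar>ext_op P g y - ext_op P g z\<bar> / dist y z \<le> lip_const P g"
    using ext_op_lipschitz[of y z] by (simp add: divide_le_eq mult.commute)
  then show "sup_weight k * \<bar>ext_op P g x\<bar> + \<bar>ext_op P g y - ext_op P g z\<bar> / dist y z \<le> 1"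
    using ext_op_abs_le_sup_norm[of x] n nonneg by (cases k) (auto simp: nrm_def sup_weight_def)
qed simp

end

section \<open>Maximisers at extreme points\<close>

lemma mol_integral_cong:
  "(\<And>s. s \<in> snd ` set mu \<Longrightarrow> f s = g s) \<Longrightarrow> mol_integral f mu = mol_integral g mu"
  unfolding mol_integral_def by (induction mu) auto

lemma mol_integral_combination:
  "mol_integral (\<lambda>x. t * g x + u * h x) mu = t * mol_integral g mu + u * mol_integral h mu"
  unfolding mol_integral_def by (induction mu) (auto simp: algebra_simps)

lemma continuous_on_mol_integral: "continuous_on A (\<lambda>f. mol_integral f mu)"
  unfolding mol_integral_def
  by (induction mu) (auto intro!: continuous_intros continuous_on_subset[OF continuous_on_product_coordinates])

lemma compact_unit_ball:
  assumes "finite P"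
  shows "compact (unit_ball k P)"
proof -
  define box :: "('a \<Rightarrow> real) set" where "box = PiE UNIV (\<lambda>x. if x \<in> P then {-1..1} else {0})"
  define C where "C = (\<Inter>x\<in>P. \<Inter>y\<in>P. \<Inter>z\<in>P - {y}.
      {f :: 'a \<Rightarrow> real. sup_weight k * \<bar>f x\<bar> + \<bar>f y - f z\<bar> / dist y z \<le> 1})"
  have "compactin (product_topology (\<lambda>_. euclidean) UNIV) box"
    unfolding box_def compactin_PiE by simp
  then have "compact box"
    by (simp add: euclidean_product_topology)
  moreover have "closed C"
    unfolding C_def
    by (intro closed_INT ballI closed_Collect_le continuous_intros
        continuous_on_subset[OF continuous_on_product_coordinates]) auto
  moreover have "unit_ball k P = box \<inter> C"
  proof (intro equalityI subsetI)
    fix f assume f: "f \<in> unit_ball k P"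
    then have "f \<in> box"
      using unit_ball_abs_le_1[OF f] unit_ball_vanishes[OF f] by (auto simp: box_def PiE_iff abs_le_iff)
    then show "f \<in> box \<inter> C"
      using unit_ball_imp_pointwise[OF f] unfolding C_def by blast
  next
    fix f assume f: "f \<in> box \<inter> C"
    then have box_mem: "f x \<in> (if x \<in> P then {-1..1} else {0})" for x
      by (simp add: box_def PiE_iff)
    have "f x = 0" if "x \<notin> P" for x
      using box_mem[of x] that by simp
    moreover have "\<bar>f x\<bar> \<le> 1" if "x \<in> P" for x
      using box_mem[of x] that by (simp add: abs_le_iff)
    ultimately show "f \<in> unit_ball k P"
      using f unfolding C_def by (intro pointwise_imp_unit_ball) auto
  qed
  ultimately show ?thesis
    using compact_Int_closed by metis
qed

lemma sum_squares_strictly_convex: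
  fixes g h :: "'a \<Rightarrow> real"
  assumes "finite P" "g \<noteq> h" "0 < t" "t < 1"
    and "\<forall>x. x \<notin> P \<longrightarrow> g x = 0" "\<forall>x. x \<notin> P \<longrightarrow> h x = 0"
  shows "(\<Sum>p\<in>P. (t * g p + (1 - t) * h p)\<^sup>2) < t * (\<Sum>p\<in>P. (g p)\<^sup>2) + (1 - t) * (\<Sum>p\<in>P. (h p)\<^sup>2)"
proof -
  obtain p where "p \<in> P" "g p \<noteq> h p"
    using assms(2,5,6) by fastforce
  then have "0 < (\<Sum>p\<in>P. (g p - h p)\<^sup>2)"
    using assms(1) by (intro sum_pos2) auto
  then have "0 < t * (1 - t) * (\<Sum>p\<in>P. (g p - h p)\<^sup>2)"
    using assms(3,4) by simp
  moreover have "(t * a + (1 - t) * b)\<^sup>2 = t * a\<^sup>2 + (1 - t) * b\<^sup>2 - t * (1 - t) * (a - b)\<^sup>2" for a b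
    by (simp add: power2_eq_square algebra_simps)
  ultimately show ?thesis
    by (simp add: sum.distrib sum_subtractf sum_distrib_left)
qed

text \<open>Among the maximisers of \<open>\<Phi>\<close>, which form a compact face of \<open>K\<close>, a maximiser of the strictly
  convex \<open>N\<close> is an extreme point of that face and hence of \<open>K\<close>.\<close>

lemma exists_extreme_maximizer:
  fixes K :: "('a \<Rightarrow> real) set"
  assumes "compact K" "K \<noteq> {}" "continuous_on K \<Phi>" "continuous_on K N"
    and affine: "\<And>g h t. g \<in> K \<Longrightarrow> h \<in> K \<Longrightarrow> 0 < t \<Longrightarrow> t < 1 \<Longrightarrow>
      \<Phi> (\<lambda>x. t * g x + (1 - t) * h x) = t * \<Phi> g + (1 - t) * \<Phi> h"
    and strict: "\<And>g h t. g \<in> K \<Longrightarrow> h \<in> K \<Longrightarrow> g \<noteq> h \<Longrightarrow> 0 < t \<Longrightarrow> t < 1 \<Longrightarrow>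
      N (\<lambda>x. t * g x + (1 - t) * h x) < t * N g + (1 - t) * N h"
  shows "\<exists>f0\<in>extreme_points K. \<forall>f\<in>K. \<Phi> f \<le> \<Phi> f0"
proof -
  obtain g0 where g0: "g0 \<in> K" "\<forall>f\<in>K. \<Phi> f \<le> \<Phi> g0"
    using continuous_attains_sup[OF assms(1-3)] by blast
  define F where "F = {f \<in> K. \<Phi> f = \<Phi> g0}"
  have "compact F"
    unfolding F_def by (rule closedin_compact[OF assms(1) continuous_closedin_preimage_constant[OF assms(3)]])
  moreover have "F \<noteq> {}"
    using g0 unfolding F_def by blast
  moreover have "continuous_on F N"
    by (rule continuous_on_subset[OF assms(4)]) (simp add: F_def)
  ultimately obtain f0 where f0: "f0 \<in> F" "\<forall>f\<in>F. N f \<le> N f0"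
    by (metis continuous_attains_sup)
  have extreme: "f0 \<in> extreme_points K"
    unfolding extreme_points_def
  proof (intro CollectI conjI ballI allI impI)
    show "f0 \<in> K" using f0 unfolding F_def by blast
    fix g h t assume g: "g \<in> K" and h: "h \<in> K"
      and comb: "0 < t \<and> t < 1 \<and> f0 = (\<lambda>x. t * g x + (1 - t) * h x)"
    then have t0: "0 < t" and t1: "t < 1" and f0_eq: "f0 = (\<lambda>x. t * g x + (1 - t) * h x)"
      by auto
    have "\<Phi> g0 = t * \<Phi> g + (1 - t) * \<Phi> h"
      using f0(1) affine[OF g h t0 t1] unfolding F_def f0_eq by simp
    then have "t * (\<Phi> g0 - \<Phi> g) + (1 - t) * (\<Phi> g0 - \<Phi> h) = 0"
      by (simp add: algebra_simps)
    moreover have "0 \<le> \<Phi> g0 - \<Phi> g" "0 \<le> \<Phi> g0 - \<Phi> h"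
      using g0 g h by auto
    ultimately have "\<Phi> g = \<Phi> g0" "\<Phi> h = \<Phi> g0"
      using t0 t1 by (simp_all add: add_nonneg_eq_0_iff)
    then have "N g \<le> N f0" "N h \<le> N f0"
      using f0(2) g h unfolding F_def by auto
    then have "t * N g + (1 - t) * N h \<le> t * N f0 + (1 - t) * N f0"
      using t0 t1 by (intro add_mono mult_left_mono) auto
    then show "g = h"
      using strict[OF g h _ t0 t1] f0_eq by (fastforce simp: algebra_simps)
  qed
  have "\<Phi> f0 = \<Phi> g0"
    using f0(1) unfolding F_def by blast
  then show ?thesis
    using g0(2) by (intro bexI[OF _ extreme]) simp
qed

lemma exists_extreme_maximizer_unit_ball:
  fixes P :: "'a::metric_space set"
  assumes "finite P"
  shows "\<exists>g\<in>extreme_points (unit_ball k P). \<forall>f\<in>unit_ball k P. mol_integral f mu \<le> mol_integral g mu"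
proof (rule exists_extreme_maximizer)
  show "compact (unit_ball k P)"
    using compact_unit_ball[OF assms] .
  have "(\<lambda>_. 0) \<in> unit_ball k P"
    by (intro pointwise_imp_unit_ball) auto
  then show "unit_ball k P \<noteq> {}"
    by blast
  show "continuous_on (unit_ball k P) (\<lambda>f. mol_integral f mu)"
    by (rule continuous_on_mol_integral)
  show "continuous_on (unit_ball k P) (\<lambda>f. \<Sum>p\<in>P. (f p)\<^sup>2)"
    by (intro continuous_intros continuous_on_subset[OF continuous_on_product_coordinates]) auto
  show "mol_integral (\<lambda>x. t * g x + (1 - t) * h x) mu = t * mol_integral g mu + (1 - t) * mol_integral h mu"
    for g h :: "'a \<Rightarrow> real" and t
    by (rule mol_integral_combination)
  show "(\<Sum>p\<in>P. (t * g p + (1 - t) * h p)\<^sup>2) < t * (\<Sum>p\<in>P. (g p)\<^sup>2) + (1 - t) * (\<Sum>p\<in>P. (h p)\<^sup>2)"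
    if "g \<in> unit_ball k P" "h \<in> unit_ball k P" "g \<noteq> h" "0 < t" "t < 1" for g h t
    using that unit_ball_vanishes by (intro sum_squares_strictly_convex[OF assms]) auto
qed

lemma dual_norm_eq_max_on_support:
  assumes "finite P" "P \<noteq> {}" "snd ` set mu \<subseteq> P"
    and g: "g \<in> unit_ball k P" and max: "\<forall>f\<in>unit_ball k P. mol_integral f mu \<le> mol_integral g mu"
  shows "dual_norm k mu = mol_integral g mu"
  unfolding dual_norm_def
proof (rule cSup_eq_maximum)
  have bl: "is_BL P g"
    using g unfolding unit_ball_def by blast
  have "mol_integral (ext_op P g) mu = mol_integral g mu"
    using ext_op_agrees[OF assms(1,2) bl] assms(3) by (intro mol_integral_cong) blast
  then show "mol_integral g mu \<in> {mol_integral f mu | f. f \<in> unit_ball k UNIV}"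
    using ext_op_in_unit_ball[OF assms(1,2) bl g] by (intro CollectI exI[of _ "ext_op P g"]) simp
next
  fix d assume "d \<in> {mol_integral f mu | f. f \<in> unit_ball k UNIV}"
  then obtain f where f: "f \<in> unit_ball k UNIV" and d: "d = mol_integral f mu"
    by blast
  have "mol_integral f mu = mol_integral (\<lambda>x. if x \<in> P then f x else 0) mu"
    using assms(3) by (intro mol_integral_cong) auto
  also have "\<dots> \<le> mol_integral g mu"
    using max unit_ball_restrict[OF f] by blast
  finally show "d \<le> mol_integral g mu"
    using d by simp
qed

section \<open>Extreme points of modulus one\<close>

lemma unit_ball_BL_unimodular_const:
  assumes g: "g \<in> unit_ball BL P" and unimod: "\<forall>x\<in>P. \<bar>g x\<bar> = 1" and "x \<in> P" "y \<in> P"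
  shows "g x = g y"
proof (rule ccontr)
  assume "g x \<noteq> g y"
  then have "x \<noteq> y" by blast
  then have "\<bar>g x\<bar> + \<bar>g x - g y\<bar> / dist x y \<le> 1"
    using unit_ball_imp_pointwise[OF g \<open>x \<in> P\<close> \<open>x \<in> P\<close> \<open>y \<in> P\<close>] by (simp add: sup_weight_def)
  moreover have "0 < \<bar>g x - g y\<bar> / dist x y"
    using \<open>g x \<noteq> g y\<close> \<open>x \<noteq> y\<close> by simp
  ultimately show False
    using unimod \<open>x \<in> P\<close> by simp
qed

text \<open>Since \<open>g\<close> is 1-Lipschitz, the points where \<open>g = -1\<close> lie at distance at least 2 from those where
  \<open>g = 1\<close>, so the cut-off cone \<open>hP\<close> of the latter takes the value \<open>-1\<close> there.\<close>

lemma hP_eq_unimodular: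
  assumes "finite P" and g: "g \<in> unit_ball FM P" and unimod: "\<forall>x\<in>P. \<bar>g x\<bar> = 1"
    and ne: "{p \<in> P. g p = 1} \<noteq> {}" and x: "x \<in> P"
  shows "hP {p \<in> P. g p = 1} x = g x"
proof -
  let ?Q = "{p \<in> P. g p = 1}"
  have "finite ?Q"
    using assms(1) by simp
  show ?thesis
  proof (cases "g x = 1")
    case True
    then have "Max ((\<lambda>p. 1 - dist x p) ` ?Q) = 1"
      using \<open>finite ?Q\<close> x by (intro Max_eqI) (auto intro: rev_image_eqI[of x])
    then show ?thesis
      using True unfolding hP_def by simp
  next
    case False
    then have gx: "g x = -1"
      using unimod x by (auto simp: abs_if split: if_splits)
    have "1 - dist x p \<le> -1" if p: "p \<in> ?Q" for p
    proof -
      have "x \<noteq> p" using gx p by auto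
      then have "\<bar>g x - g p\<bar> / dist x p \<le> 1"
        using unit_ball_imp_pointwise[OF g x x _ \<open>x \<noteq> p\<close>] p by (simp add: sup_weight_def)
      then show ?thesis
        using gx p \<open>x \<noteq> p\<close> by (simp add: divide_le_eq)
    qed
    then have "Max ((\<lambda>p. 1 - dist x p) ` ?Q) \<le> -1"
      using \<open>finite ?Q\<close> ne by (subst Max_le_iff) auto
    then show ?thesis
      using gx unfolding hP_def by simp
  qed
qed

lemma unimodular_agrees_with_E_set:
  assumes "finite P" "P \<noteq> {}" and g: "g \<in> unit_ball k P" and unimod: "\<forall>x\<in>P. \<bar>g x\<bar> = 1"
  shows "\<exists>f\<in>E_set k. \<forall>x\<in>P. f x = g x"
proof (cases k)
  case BL
  obtain p where p: "p \<in> P"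
    using assms(2) by blast
  then have "g p = 1 \<or> g p = -1"
    using unimod by (auto simp: abs_if split: if_splits)
  then have "(\<lambda>_ :: 'a. g p) \<in> E_set k"
    unfolding E_set_def BL by auto
  moreover have "\<forall>x\<in>P. g p = g x"
    using unit_ball_BL_unimodular_const[OF g[unfolded BL] unimod p] by blast
  ultimately show ?thesis
    by force
next
  case FM
  show ?thesis
  proof (cases "{p \<in> P. g p = 1} = {}")
    case True
    have "(\<lambda>_ :: 'a. -1) \<in> unit_ball FM UNIV"
      by (intro pointwise_imp_unit_ball) (auto simp: sup_weight_def)
    then have "(\<lambda>_ :: 'a. -1) \<in> E_set k"
      unfolding E_set_def FM by simp
    moreover have "\<forall>x\<in>P. g x = -1"
      using unimod True by (auto simp: abs_if split: if_splits)
    ultimately show ?thesis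
      by force
  next
    case False
    then have "hP {p \<in> P. g p = 1} \<in> E_set k"
      unfolding E_set_def FM using assms(1) by auto
    then show ?thesis
      using hP_eq_unimodular[OF assms(1) g[unfolded FM] unimod False] by blast
  qed
qed

lemma extreme_point_agrees_with_E_set:
  assumes "finite P" "P \<noteq> {}" and g: "g \<in> extreme_points (unit_ball k P)"
  shows "\<exists>f\<in>E_set k. \<forall>x\<in>P. f x = g x"
proof (cases "g \<in> ext_star k P")
  case True
  then have "ext_op P g \<in> E_set k"
    using assms(1,2) unfolding E_set_def by (cases k) auto
  moreover have "is_BL P g"
    using g unfolding extreme_points_def unit_ball_def by blast
  ultimately show ?thesis
    using ext_op_agrees[OF assms(1,2)] by blast
next
  case False
  then show ?thesis
    using g unimodular_agrees_with_E_set[OF assms(1,2)]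
    unfolding ext_star_def extreme_points_def by blast
qed

theorem proposition5p4:
  fixes mu :: "(real \<times> 'a::metric_space) list" and k :: normkind
  shows "\<exists>f \<in> E_set k. dual_norm k mu = mol_integral f mu"
proof -
  define P where "P = insert undefined (snd ` set mu)"
  have P: "finite P" "P \<noteq> {}" "snd ` set mu \<subseteq> P"
    unfolding P_def by auto
  obtain g where g: "g \<in> extreme_points (unit_ball k P)"
    and max: "\<forall>f\<in>unit_ball k P. mol_integral f mu \<le> mol_integral g mu"
    using exists_extreme_maximizer_unit_ball[OF P(1)] by blast
  have "dual_norm k mu = mol_integral g mu"
    using g max dual_norm_eq_max_on_support[OF P] unfolding extreme_points_def by blast
  moreover obtain f where "f \<in> E_set k" "\<forall>x\<in>P. f x = g x"
    using extreme_point_agrees_with_E_set[OF P(1,2) g] by blast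
  moreover from this have "mol_integral f mu = mol_integral g mu"
    using P(3) by (intro mol_integral_cong) blast
  ultimately show ?thesis
    by metis
qed

end
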